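(* Let $G$ be a finite simple undirected graph and $r<s$ positive integers. Run the procedure set-k on $(G,r,s)$ and let $R_1,R_2,\dots$ be the $K_r$s of $G$ in the order in which they are processed. Then the sequence $\kappa(R_1),\kappa(R_2),\dots$ is monotonically non-decreasing.
   Context: A $K_r$ is an $r$-clique of $G$. Procedure set-k$(G,r,s)$: enumerate all $K_r$s and $K_s$s of $G$; for every $K_r$ $R$ initialize $\delta(R)$ to the number of $K_s$s containing $R$; mark every $K_r$ unprocessed. Then repeat until all $K_r$s are processed: pick an unprocessed $K_r$ $R$ with minimum current $\delta(R)$ (ties broken arbitrarily); set $\kappa(R)=\delta(R)$; for each $K_s$ $S$ containing $R$: if some $K_r$ contained in $S$ is already marked processed, skip $S$; otherwise, for each $K_r$ $R'\subset S$ with $R'\neq R$, if $\delta(R')>\delta(R)$ then decrease $\delta(R')$ by $1$. Finally mark $R$ processed. The output is the array $\kappa(\cdot)$. *)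

theory Defs
  imports Main
begin

definition simple_graph :: "'a set \<Rightarrow> ('a \<Rightarrow> 'a \<Rightarrow> bool) \<Rightarrow> bool" where
  "simple_graph V E \<longleftrightarrow> finite V \<and> (\<forall>x y. E x y \<longrightarrow> x \<in> V \<and> y \<in> V)
     \<and> (\<forall>x y. E x y \<longrightarrow> E y x) \<and> (\<forall>x. \<not> E x x)"

definition cliques :: "'a set \<Rightarrow> ('a \<Rightarrow> 'a \<Rightarrow> bool) \<Rightarrow> nat \<Rightarrow> 'a set set" where
  "cliques V E k = {C. C \<subseteq> V \<and> card C = k \<and> (\<forall>x\<in>C. \<forall>y\<in>C. x \<noteq> y \<longrightarrow> E x y)}"

definition delta0 :: "'a set \<Rightarrow> ('a \<Rightarrow> 'a \<Rightarrow> bool) \<Rightarrow> nat \<Rightarrow> 'a set \<Rightarrow> nat" where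
  "delta0 V E s R = card {S \<in> cliques V E s. R \<subseteq> S}"

definition process_S :: "'a set \<Rightarrow> ('a \<Rightarrow> 'a \<Rightarrow> bool) \<Rightarrow> nat \<Rightarrow> 'a set set \<Rightarrow> 'a set
    \<Rightarrow> 'a set \<Rightarrow> ('a set \<Rightarrow> nat) \<Rightarrow> ('a set \<Rightarrow> nat)" where
  "process_S V E r Done R S \<delta> =
     (if \<exists>R''\<in>cliques V E r. R'' \<in> Done \<and> R'' \<subseteq> S then \<delta>
      else (\<lambda>R'. if R' \<in> cliques V E r \<and> R' \<subseteq> S \<and> R' \<noteq> R \<and> \<delta> R' > \<delta> R
                 then \<delta> R' - 1 else \<delta> R'))"

text \<open>A state consists of the list of processed K_r's in
  processing order, each paired with its value kappa, and the current delta array.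
  The choice of the minimum (ties arbitrary) and the order in which the K_s's
  containing R are visited are both nondeterministic.\<close>
inductive set_k_run :: "'a set \<Rightarrow> ('a \<Rightarrow> 'a \<Rightarrow> bool) \<Rightarrow> nat \<Rightarrow> nat
    \<Rightarrow> ('a set \<times> nat) list \<Rightarrow> ('a set \<Rightarrow> nat) \<Rightarrow> bool"
  for V E r s where
  init: "set_k_run V E r s [] (delta0 V E s)"
| step: "\<lbrakk> set_k_run V E r s P \<delta>;
          R \<in> cliques V E r; R \<notin> fst ` set P;
          \<forall>R'\<in>cliques V E r - fst ` set P. \<delta> R \<le> \<delta> R';
          distinct Ss; set Ss = {S \<in> cliques V E s. R \<subseteq> S} \<rbrakk>
        \<Longrightarrow> set_k_run V E r s (P @ [(R, \<delta> R)])
              (fold (process_S V E r (fst ` set P) R) Ss \<delta>)"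

end

theory Submission
  imports Defs
begin

text \<open>While R is processed, a value \<delta>(R') is only decremented when it exceeds \<delta>(R), so it
  never falls below \<delta>(R) = \<kappa>(R), and \<delta>(R) itself is untouched. Hence every value recorded so
  far is a lower bound for the current \<delta> on all unprocessed K_r's, and the next minimum
  recorded cannot be smaller than any earlier one.\<close>

lemma process_S_self: "process_S V E r Done R S \<delta> R = \<delta> R"
  by (simp add: process_S_def)

lemma process_S_lower_bound:
  "\<delta> R \<le> \<delta> R' \<Longrightarrow> \<delta> R \<le> process_S V E r Done R S \<delta> R'"
  by (auto simp add: process_S_def)

lemma fold_process_S_lower_bound:
  "\<delta> R \<le> \<delta> R' \<Longrightarrow> \<delta> R \<le> fold (process_S V E r Done R) Ss \<delta> R'"
proof (induction Ss arbitrary: \<delta>)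
  case Nil
  then show ?case by simp
next
  case (Cons S Ss)
  have "process_S V E r Done R S \<delta> R \<le> process_S V E r Done R S \<delta> R'"
    using Cons.prems by (simp add: process_S_self process_S_lower_bound)
  from Cons.IH[OF this] show ?case by (simp add: process_S_self)
qed

lemma set_k_run_sorted_and_bounded:
  assumes "set_k_run V E r s P \<delta>"
  shows "sorted (map snd P) \<and>
    (\<forall>x\<in>set P. \<forall>R'\<in>cliques V E r - fst ` set P. snd x \<le> \<delta> R')"
  using assms
proof (induction rule: set_k_run.induct)
  case init
  then show ?case by simp
next
  case (step P \<delta> R Ss)
  let ?\<delta>' = "fold (process_S V E r (fst ` set P) R) Ss \<delta>"
  have recorded_le_min: "snd x \<le> \<delta> R" if "x \<in> set P" for x
    using step.IH step.hyps(2,3) that by blast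
  have min_le_new: "\<delta> R \<le> ?\<delta>' R'"
    if "R' \<in> cliques V E r - fst ` set (P @ [(R, \<delta> R)])" for R'
    using fold_process_S_lower_bound[of \<delta> R R'] step.hyps(4) that by auto
  show ?case
  proof
    show "sorted (map snd (P @ [(R, \<delta> R)]))"
      using step.IH recorded_le_min by (auto simp: sorted_append)
    show "\<forall>x\<in>set (P @ [(R, \<delta> R)]).
        \<forall>R'\<in>cliques V E r - fst ` set (P @ [(R, \<delta> R)]). snd x \<le> ?\<delta>' R'"
    proof (intro ballI)
      fix x R'
      assume x: "x \<in> set (P @ [(R, \<delta> R)])"
        and new: "R' \<in> cliques V E r - fst ` set (P @ [(R, \<delta> R)])"
      have "snd x \<le> \<delta> R" using x recorded_le_min[of x] by auto
      also have "\<dots> \<le> ?\<delta>' R'" using min_le_new[OF new] .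
      finally show "snd x \<le> ?\<delta>' R'" .
    qed
  qed
qed

text \<open>Only the run itself matters.\<close>

theorem claim1:
  fixes V :: "'a set" and E :: "'a \<Rightarrow> 'a \<Rightarrow> bool" and r s :: nat
    and P :: "('a set \<times> nat) list" and \<delta> :: "'a set \<Rightarrow> nat"
  assumes "simple_graph V E" and "0 < r" and "r < s"
    and "set_k_run V E r s P \<delta>"
    and "fst ` set P = cliques V E r"
  shows "sorted (map snd P)"
  using set_k_run_sorted_and_bounded[OF assms(4)] by blast

end
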